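(* Let $P$ be a set of $n$ points in the plane in convex position, let $S$ be an optimal dominating set of $G(P)$, and let $\phi:\mathcal{A}\rightarrow S$ be an assignment (for some partition $\mathcal{A}$ of $P$) satisfying: (1) $\phi$ is line separable; (2) each center $p\in S$ is assigned at most two sublists, one of which contains $p$; (3) for any center $p_i$ that is assigned a second sublist $\beta_i$ (not containing $p_i$), there exist $p_t\in\beta_i$ and centers $q_1,q_2\in S$ with $q_1\in P(i,t)$, $q_2\in P(t,i)$, $p_t\notin D_{q_1}$, $p_t\notin D_{q_2}$. Let $p_i,p_j\in S$ be two centers each of whose groups consists of two sublists. Removing these four sublists from the cyclic list $P$ leaves four portions: one bounded by the two sublists of $p_i$, one bounded by the two sublists of $p_j$, and two portions each bounded by a sublist of $p_i$ and a sublist of $p_j$. Then for any other center of $S$ whose group consists of two sublists, either both of its sublists lie in one of the first two portions, or one of its sublists lies in one of the last two portions and the other lies in the other of the last two portions.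
   Context: $P$ is in convex position (every point is a hull vertex), no three points collinear, no four cocircular; $P$ is the cyclic list $\langle p_1,\dots,p_n\rangle$ counterclockwise along the hull. A sublist is a contiguous subsequence of the cyclic list. $P[i,j]$ is the sublist from $p_i$ counterclockwise to $p_j$ inclusive; $P(i,j)$ excludes $p_i,p_j$. $D_p$ is the closed unit disk centered at $p$. $G(P)$ has an edge between two points of $P$ iff their distance is at most $1$. A dominating set $S\subseteq P$: every point of $P$ is in $S$ or within distance $1$ of a point of $S$; its points are centers. Optimal dominating set: the points carry positive weights and $S$ is a dominating set of minimum total weight (unit weights give the minimum-cardinality case). A partition $\mathcal{A}$ of $P$ is a partition of the cyclic list into consecutive nonempty disjoint sublists. An assignment $\phi:\mathcal{A}\to S$ maps each sublist $\alpha$ to one center $p$ with $\alpha\subseteq D_p$; the group of $p$ consists of the sublists (points) assigned to $p$. $\phi$ is line separable if for every two distinct centers some line has the points of one group on one side or on the line and those of the other group strictly on the other side. *)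

theory Defs
  imports "HOL-Analysis.Analysis"
begin

text \<open>Points are p 0, ..., p (n-1) (indices 0-based), listed counterclockwise.\<close>

definition orient :: "real^2 \<Rightarrow> real^2 \<Rightarrow> real^2 \<Rightarrow> real" where
  "orient a b c = (b$1 - a$1) * (c$2 - a$2) - (b$2 - a$2) * (c$1 - a$1)"

text \<open>Convex position, counterclockwise along the hull, no three collinear:
  every triple in cyclic (increasing index) order is strictly left-turning.\<close>
definition convex_ccw :: "nat \<Rightarrow> (nat \<Rightarrow> real^2) \<Rightarrow> bool" where
  "convex_ccw n p \<longleftrightarrow> inj_on p {..<n} \<and>
     (\<forall>i j k. i < j \<longrightarrow> j < k \<longrightarrow> k < n \<longrightarrow> orient (p i) (p j) (p k) > 0)"

definition no_four_cocircular :: "nat \<Rightarrow> (nat \<Rightarrow> real^2) \<Rightarrow> bool" where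
  "no_four_cocircular n p \<longleftrightarrow>
     (\<forall>i j k l. i < n \<longrightarrow> j < n \<longrightarrow> k < n \<longrightarrow> l < n \<longrightarrow> distinct [i, j, k, l] \<longrightarrow>
        \<not> (\<exists>c r. dist (p i) c = r \<and> dist (p j) c = r \<and> dist (p k) c = r \<and> dist (p l) c = r))"

definition cdist :: "nat \<Rightarrow> nat \<Rightarrow> nat \<Rightarrow> nat" where
  "cdist n i k = (k + n - i) mod n"

definition cyc_closed :: "nat \<Rightarrow> nat \<Rightarrow> nat \<Rightarrow> nat set" where
  "cyc_closed n i j = {k. k < n \<and> cdist n i k \<le> cdist n i j}"

definition cyc_open :: "nat \<Rightarrow> nat \<Rightarrow> nat \<Rightarrow> nat set" where
  "cyc_open n i j = {k. k < n \<and> 0 < cdist n i k \<and> cdist n i k < cdist n i j}"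

definition is_sublist :: "nat \<Rightarrow> nat set \<Rightarrow> bool" where
  "is_sublist n \<alpha> \<longleftrightarrow> (\<exists>i<n. \<exists>j<n. \<alpha> = cyc_closed n i j)"

definition is_partition :: "nat \<Rightarrow> nat set set \<Rightarrow> bool" where
  "is_partition n A \<longleftrightarrow>
     (\<forall>\<alpha>\<in>A. is_sublist n \<alpha> \<and> \<alpha> \<noteq> {}) \<and>
     (\<forall>\<alpha>\<in>A. \<forall>\<beta>\<in>A. \<alpha> \<noteq> \<beta> \<longrightarrow> \<alpha> \<inter> \<beta> = {}) \<and>
     \<Union>A = {..<n}"

definition dominating :: "nat \<Rightarrow> (nat \<Rightarrow> real^2) \<Rightarrow> nat set \<Rightarrow> bool" where
  "dominating n p S \<longleftrightarrow> S \<subseteq> {..<n} \<and>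
     (\<forall>k<n. k \<in> S \<or> (\<exists>s\<in>S. dist (p k) (p s) \<le> 1))"

definition optimal_dominating ::
  "nat \<Rightarrow> (nat \<Rightarrow> real^2) \<Rightarrow> (nat \<Rightarrow> real) \<Rightarrow> nat set \<Rightarrow> bool" where
  "optimal_dominating n p w S \<longleftrightarrow> dominating n p S \<and>
     (\<forall>S'. dominating n p S' \<longrightarrow> sum w S \<le> sum w S')"

definition is_assignment ::
  "nat \<Rightarrow> (nat \<Rightarrow> real^2) \<Rightarrow> nat set \<Rightarrow> nat set set \<Rightarrow> (nat set \<Rightarrow> nat) \<Rightarrow> bool" where
  "is_assignment n p S A \<phi> \<longleftrightarrow>
     (\<forall>\<alpha>\<in>A. \<phi> \<alpha> \<in> S \<and> (\<forall>k\<in>\<alpha>. dist (p k) (p (\<phi> \<alpha>)) \<le> 1))"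

definition center_group :: "nat set set \<Rightarrow> (nat set \<Rightarrow> nat) \<Rightarrow> nat \<Rightarrow> nat set set" where
  "center_group A \<phi> c = {\<alpha>\<in>A. \<phi> \<alpha> = c}"

definition line_separable ::
  "(nat \<Rightarrow> real^2) \<Rightarrow> nat set \<Rightarrow> nat set set \<Rightarrow> (nat set \<Rightarrow> nat) \<Rightarrow> bool" where
  "line_separable p S A \<phi> \<longleftrightarrow>
     (\<forall>c1\<in>S. \<forall>c2\<in>S. c1 \<noteq> c2 \<longrightarrow>
        (\<exists>a b. a \<noteq> 0 \<and> (\<forall>k\<in>\<Union>(center_group A \<phi> c1). a \<bullet> p k \<le> b)
                      \<and> (\<forall>k\<in>\<Union>(center_group A \<phi> c2). a \<bullet> p k > b)))"

text \<open>Portions: for an index k outside the removed sublists F, the first removed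
  sublist met going counterclockwise (next) and clockwise (previous) from k.\<close>
definition next_is :: "nat \<Rightarrow> nat set set \<Rightarrow> nat \<Rightarrow> nat set \<Rightarrow> bool" where
  "next_is n F k X \<longleftrightarrow> X \<in> F \<and> (\<exists>m\<in>X. \<forall>l\<in>\<Union>F. l \<notin> cyc_open n k m)"

definition prev_is :: "nat \<Rightarrow> nat set set \<Rightarrow> nat \<Rightarrow> nat set \<Rightarrow> bool" where
  "prev_is n F k X \<longleftrightarrow> X \<in> F \<and> (\<exists>m\<in>X. \<forall>l\<in>\<Union>F. l \<notin> cyc_open n m k)"

definition portion :: "nat \<Rightarrow> nat set set \<Rightarrow> nat set \<Rightarrow> nat set \<Rightarrow> nat set" where
  "portion n F X Y = {k. k < n \<and> k \<notin> \<Union>F \<and>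
     ((prev_is n F k X \<and> next_is n F k Y) \<or> (prev_is n F k Y \<and> next_is n F k X))}"

end

theory Submission
  imports Defs
begin

text \<open>Line separability forbids the groups of two centers to interleave along the hull, and
  optimality gives every center a private point, dominated by no other center. With property (3)
  this yields a gadget for every center with two sublists: two of its points \<open>s, e\<close> at distance
  at most 1 whose arc contains points \<open>u, w\<close> with \<open>|u e| > 1\<close> and \<open>|s w| > 1\<close>. An angle count
  shows that three gadgets never lie on pairwise disjoint arcs.

  A sublist of another center \<open>c\<close> with two sublists lies in a gap between consecutive removed
  points. If both ends of the gap belong to the same one of \<open>p\<^sub>i, p\<^sub>j\<close>, non-interleaving puts the
  whole group of \<open>c\<close> into this gap, which runs between the two sublists of that center. If the
  ends belong to \<open>p\<^sub>i\<close> and \<open>p\<^sub>j\<close>, the gap cannot hold the whole group of \<open>c\<close>, since the gadgets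
  of \<open>c\<close>, \<open>p\<^sub>i\<close> and \<open>p\<^sub>j\<close> would lie on disjoint arcs; and two different gaps bounded by a
  sublist of \<open>p\<^sub>i\<close> and one of \<open>p\<^sub>j\<close> are bounded by different pairs of sublists.\<close>

section \<open>Angles of triangles in the complex plane\<close>

definition orient_cplx :: "complex \<Rightarrow> complex \<Rightarrow> complex \<Rightarrow> real" where
  "orient_cplx x a b = Im (cnj (a - x) * (b - x))"

definition ccw_angle :: "complex \<Rightarrow> complex \<Rightarrow> complex \<Rightarrow> real" where
  "ccw_angle x a b = Arg2pi ((b - x) / (a - x))"

lemma orient_cplx_rotate: "orient_cplx a b c = orient_cplx b c a"
  unfolding orient_cplx_def by (simp add: algebra_simps)

lemma orient_cplx_pos_imp_distinct: "orient_cplx x a b > 0 \<Longrightarrow> a \<noteq> x \<and> b \<noteq> x"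
  unfolding orient_cplx_def by auto

lemma ccw_angle_bounds:
  assumes "orient_cplx x a b > 0"
  shows "0 < ccw_angle x a b" "ccw_angle x a b < pi"
proof -
  have "a \<noteq> x" using orient_cplx_pos_imp_distinct[OF assms] by auto
  then have "Im ((b - x) / (a - x)) = orient_cplx x a b / (cmod (a - x))\<^sup>2"
    unfolding orient_cplx_def by (simp add: Im_divide cmod_power2 algebra_simps)
  with assms \<open>a \<noteq> x\<close> have "Im ((b - x) / (a - x)) > 0" by simp
  then show "0 < ccw_angle x a b" "ccw_angle x a b < pi"
    unfolding ccw_angle_def using Arg2pi_lt_pi by blast+
qed

lemma ccw_angle_add:
  assumes "orient_cplx x a b > 0" "orient_cplx x b c > 0" "orient_cplx x a c > 0"
  shows "ccw_angle x a c = ccw_angle x a b + ccw_angle x b c"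
proof -
  have ne: "a - x \<noteq> 0" "b - x \<noteq> 0" "c - x \<noteq> 0"
    using orient_cplx_pos_imp_distinct assms by auto
  have lt: "ccw_angle x a b < pi" "ccw_angle x b c < pi" using ccw_angle_bounds assms by auto
  have "(b - x) / (a - x) * ((c - x) / (b - x)) = (c - x) / (a - x)" using ne by simp
  then show ?thesis
    using Arg2pi_add[of "(b - x) / (a - x)" "(c - x) / (b - x)"] ne lt
    unfolding ccw_angle_def by (auto split: if_splits)
qed

lemma ccw_angle_triangle_sum:
  assumes "orient_cplx a b c > 0"
  shows "ccw_angle a b c + ccw_angle b c a + ccw_angle c a b = pi"
proof -
  have o: "orient_cplx b c a > 0" "orient_cplx c a b > 0" using assms orient_cplx_rotate by metis+
  have ne: "a - b \<noteq> 0" "b - c \<noteq> 0" "c - a \<noteq> 0" using orient_cplx_pos_imp_distinct assms o by auto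
  have lt: "ccw_angle a b c < pi" "ccw_angle b c a < pi" "ccw_angle c a b < pi"
    using ccw_angle_bounds assms o by auto
  define z1 where "z1 = (c - a) / (b - a)"
  define z2 where "z2 = (a - b) / (c - b)"
  define z3 where "z3 = (b - c) / (a - c)"
  have nz: "z1 \<noteq> 0" "z2 \<noteq> 0" "z3 \<noteq> 0" using ne by (auto simp: z1_def z2_def z3_def)
  have "z1 * z2 * z3 = -1" using ne unfolding z1_def z2_def z3_def
    by (simp add: divide_simps) (simp add: algebra_simps)
  then have "Arg2pi (z1 * z2) + Arg2pi z3 \<in> {pi, 3 * pi}"
    using Arg2pi_add[of "z1 * z2" z3] nz Arg2pi_of_real[of "-1"] by (auto split: if_splits)
  moreover have "Arg2pi (z1 * z2) < 2 * pi" using Arg2pi by blast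
  moreover have "Arg2pi z1 + Arg2pi z2 = Arg2pi (z1 * z2)"
    using Arg2pi_add[OF nz(1,2)] lt unfolding ccw_angle_def z1_def z2_def by (auto split: if_splits)
  ultimately show ?thesis using lt unfolding ccw_angle_def z1_def z2_def z3_def by auto
qed

lemma cos_ccw_angle:
  assumes "a \<noteq> x" "b \<noteq> x"
  shows "cos (ccw_angle x a b) = Re (cnj (a - x) * (b - x)) / (cmod (a - x) * cmod (b - x))"
proof -
  let ?z = "(b - x) / (a - x)"
  have "cmod ?z * cos (Arg2pi ?z) = Re ?z" by (rule cos_Arg2pi)
  moreover have "cmod ?z = cmod (b - x) / cmod (a - x)" by (simp add: norm_divide)
  moreover have "Re ?z = Re (cnj (a - x) * (b - x)) / (cmod (a - x))\<^sup>2"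
    by (simp add: Re_divide cmod_power2 algebra_simps)
  moreover have "cmod (a - x) > 0" "cmod (b - x) > 0" using assms by auto
  ultimately show ?thesis unfolding ccw_angle_def by (simp add: field_simps power2_eq_square)
qed

lemma law_of_cosines_cplx:
  "2 * Re (cnj (u - s) * (e - s)) = (cmod (u - s))\<^sup>2 + (cmod (e - s))\<^sup>2 - (cmod (u - e))\<^sup>2"
  by (simp only: cmod_power2) (simp add: power2_eq_square algebra_simps)

lemma cos_ccw_angle_diff:
  assumes "orient_cplx s u e > 0"
  obtains K where "K \<ge> 0"
    "cos (ccw_angle u e s) - cos (ccw_angle s u e) = K * (cmod (u - e) - cmod (e - s))"
proof -
  have "orient_cplx u e s > 0" using assms orient_cplx_rotate by metis
  then have ne: "u \<noteq> s" "e \<noteq> s" "e \<noteq> u" using orient_cplx_pos_imp_distinct assms by auto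
  define a where "a = cmod (u - e)"
  define b where "b = cmod (e - s)"
  define c where "c = cmod (s - u)"
  have pos: "a > 0" "b > 0" "c > 0" using ne by (auto simp: a_def b_def c_def)
  have "c \<le> a + b" unfolding a_def b_def c_def
    using norm_triangle_ineq[of "s - e" "e - u"] by (simp add: norm_minus_commute)
  then have "c\<^sup>2 \<le> (a + b)\<^sup>2" using pos by (intro power_mono) auto
  moreover have "cos (ccw_angle s u e) = (c\<^sup>2 + b\<^sup>2 - a\<^sup>2) / (2 * c * b)"
    using cos_ccw_angle[of u s e] law_of_cosines_cplx[of u s e] ne
    by (simp add: a_def b_def c_def norm_minus_commute field_simps)
  moreover have "cos (ccw_angle u e s) = (a\<^sup>2 + c\<^sup>2 - b\<^sup>2) / (2 * a * c)"
    using cos_ccw_angle[of e u s] law_of_cosines_cplx[of e u s] ne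
    by (simp add: a_def b_def c_def norm_minus_commute field_simps)
  moreover have "(a\<^sup>2 + c\<^sup>2 - b\<^sup>2) / (2 * a * c) - (c\<^sup>2 + b\<^sup>2 - a\<^sup>2) / (2 * c * b)
      = ((a + b)\<^sup>2 - c\<^sup>2) / (2 * a * b * c) * (a - b)"
    using pos by (simp add: field_simps power2_eq_square)
  ultimately show ?thesis
    using that[of "((a + b)\<^sup>2 - c\<^sup>2) / (2 * a * b * c)"] pos by (simp add: a_def b_def)
qed

lemma ccw_angle_le_if_opposite_side_le:
  assumes "orient_cplx s u e > 0" "cmod (e - s) \<le> cmod (u - e)"
  shows "ccw_angle u e s \<le> ccw_angle s u e"
proof -
  obtain K where "K \<ge> 0" "cos (ccw_angle u e s) - cos (ccw_angle s u e) = K * (cmod (u - e) - cmod (e - s))"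
    using cos_ccw_angle_diff[OF assms(1)] .
  moreover have "K * (cmod (u - e) - cmod (e - s)) \<ge> 0" using \<open>K \<ge> 0\<close> assms(2) by simp
  ultimately have "cos (ccw_angle s u e) \<le> cos (ccw_angle u e s)" by linarith
  moreover have "orient_cplx u e s > 0" using assms(1) orient_cplx_rotate by metis
  ultimately show ?thesis
    using ccw_angle_bounds[OF assms(1)] ccw_angle_bounds[of u e s] cos_mono_le_eq by auto
qed

lemma ccw_angle_ge_if_opposite_side_ge:
  assumes "orient_cplx s u e > 0" "cmod (u - e) \<le> cmod (e - s)"
  shows "ccw_angle s u e \<le> ccw_angle u e s"
proof -
  obtain K where "K \<ge> 0" "cos (ccw_angle u e s) - cos (ccw_angle s u e) = K * (cmod (u - e) - cmod (e - s))"
    using cos_ccw_angle_diff[OF assms(1)] .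
  moreover have "K * (cmod (u - e) - cmod (e - s)) \<le> 0"
    using \<open>K \<ge> 0\<close> assms(2) by (simp add: mult_nonneg_nonpos)
  ultimately have "cos (ccw_angle u e s) \<le> cos (ccw_angle s u e)" by linarith
  moreover have "orient_cplx u e s > 0" using assms(1) orient_cplx_rotate by metis
  ultimately show ?thesis
    using ccw_angle_bounds[OF assms(1)] ccw_angle_bounds[of u e s] cos_mono_le_eq by auto
qed

text \<open>The sides \<open>u e\<close> and \<open>s w\<close> are longer than \<open>e s\<close>, so the triangles \<open>s u e\<close> and
  \<open>s w e\<close> have large angles at \<open>s\<close> and at \<open>e\<close>; by convexity, what is left of the angles
  at \<open>s\<close> and \<open>e\<close> towards the rest of the polygon is less than \<open>4\<pi>/3\<close>.\<close>
lemma gadget_angle_bound: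
  assumes "orient_cplx s u e > 0" "orient_cplx s w e > 0" "orient_cplx s e D > 0"
    and "orient_cplx s u D > 0" "orient_cplx s w D > 0"
    and "orient_cplx e A s > 0" "orient_cplx e s u > 0" "orient_cplx e s w > 0"
    and "orient_cplx e A u > 0" "orient_cplx e A w > 0"
    and "cmod (e - s) \<le> 1" "cmod (u - e) > 1" "cmod (s - w) > 1"
  shows "ccw_angle s e D + ccw_angle e A s < 4 * pi / 3"
proof -
  have "ccw_angle s u D = ccw_angle s u e + ccw_angle s e D"
    "ccw_angle s w D = ccw_angle s w e + ccw_angle s e D"
    "ccw_angle e A u = ccw_angle e A s + ccw_angle e s u"
    "ccw_angle e A w = ccw_angle e A s + ccw_angle e s w"
    using ccw_angle_add assms by auto
  moreover have "ccw_angle s u D < pi" "ccw_angle s w D < pi" "ccw_angle e A u < pi"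
    "ccw_angle e A w < pi"
    using ccw_angle_bounds assms by auto
  moreover have "ccw_angle s u e + ccw_angle u e s + ccw_angle e s u = pi"
    "ccw_angle s w e + ccw_angle w e s + ccw_angle e s w = pi"
    using ccw_angle_triangle_sum assms by auto
  moreover have "ccw_angle u e s \<le> ccw_angle s u e"
    using ccw_angle_le_if_opposite_side_le assms by force
  moreover have "ccw_angle w e s \<le> ccw_angle e s w"
    using ccw_angle_ge_if_opposite_side_ge[of w e s] assms orient_cplx_rotate by force
  ultimately show ?thesis by linarith
qed

text \<open>Summing the bounds for three gadgets counts every angle of the triangles
  \<open>s\<^sub>1 e\<^sub>1 s\<^sub>2\<close>, \<open>s\<^sub>2 e\<^sub>2 s\<^sub>3\<close>, \<open>s\<^sub>3 e\<^sub>3 s\<^sub>1\<close> and \<open>s\<^sub>1 s\<^sub>2 s\<^sub>3\<close> exactly once, which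
  gives \<open>4\<pi> < 4\<pi>\<close>.\<close>
lemma three_gadgets_impossible:
  fixes P :: "'a \<Rightarrow> complex" and r :: "'a \<Rightarrow> nat"
  assumes conv: "\<And>a b c. a \<in> V \<Longrightarrow> b \<in> V \<Longrightarrow> c \<in> V \<Longrightarrow> r a < r b \<Longrightarrow> r b < r c \<Longrightarrow>
      orient_cplx (P a) (P b) (P c) > 0"
    and V: "{s1, u1, w1, e1, s2, u2, w2, e2, s3, u3, w3, e3} \<subseteq> V"
    and r1: "r s1 < r u1" "r u1 < r e1" "r s1 < r w1" "r w1 < r e1" "r e1 < r s2"
    and r2: "r s2 < r u2" "r u2 < r e2" "r s2 < r w2" "r w2 < r e2" "r e2 < r s3"
    and r3: "r s3 < r u3" "r u3 < r e3" "r s3 < r w3" "r w3 < r e3"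
    and g1: "cmod (P e1 - P s1) \<le> 1" "cmod (P u1 - P e1) > 1" "cmod (P s1 - P w1) > 1"
    and g2: "cmod (P e2 - P s2) \<le> 1" "cmod (P u2 - P e2) > 1" "cmod (P s2 - P w2) > 1"
    and g3: "cmod (P e3 - P s3) \<le> 1" "cmod (P u3 - P e3) > 1" "cmod (P s3 - P w3) > 1"
  shows False
proof -
  have C: "orient_cplx (P a) (P b) (P c) > 0"
    if "a \<in> V" "b \<in> V" "c \<in> V"
      "(r a < r b \<and> r b < r c) \<or> (r b < r c \<and> r c < r a) \<or> (r c < r a \<and> r a < r b)" for a b c
    using that conv orient_cplx_rotate by metis
  have "ccw_angle (P s1) (P e1) (P e3) + ccw_angle (P e1) (P s2) (P s1) < 4 * pi / 3"
    "ccw_angle (P s2) (P e2) (P e1) + ccw_angle (P e2) (P s3) (P s2) < 4 * pi / 3"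
    "ccw_angle (P s3) (P e3) (P e2) + ccw_angle (P e3) (P s1) (P s3) < 4 * pi / 3"
    by (rule gadget_angle_bound; use V r1 r2 r3 g1 g2 g3 in \<open>auto intro!: C\<close>)+
  moreover have
    "ccw_angle (P s1) (P e1) (P e3) = ccw_angle (P s1) (P e1) (P s2) + ccw_angle (P s1) (P s2) (P e3)"
    "ccw_angle (P s1) (P s2) (P e3) = ccw_angle (P s1) (P s2) (P s3) + ccw_angle (P s1) (P s3) (P e3)"
    "ccw_angle (P s2) (P e2) (P e1) = ccw_angle (P s2) (P e2) (P s3) + ccw_angle (P s2) (P s3) (P e1)"
    "ccw_angle (P s2) (P s3) (P e1) = ccw_angle (P s2) (P s3) (P s1) + ccw_angle (P s2) (P s1) (P e1)"
    "ccw_angle (P s3) (P e3) (P e2) = ccw_angle (P s3) (P e3) (P s1) + ccw_angle (P s3) (P s1) (P e2)"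
    "ccw_angle (P s3) (P s1) (P e2) = ccw_angle (P s3) (P s1) (P s2) + ccw_angle (P s3) (P s2) (P e2)"
    by (rule ccw_angle_add; rule C; use V r1 r2 r3 in auto)+
  moreover have
    "ccw_angle (P s1) (P e1) (P s2) + ccw_angle (P e1) (P s2) (P s1) + ccw_angle (P s2) (P s1) (P e1) = pi"
    "ccw_angle (P s2) (P e2) (P s3) + ccw_angle (P e2) (P s3) (P s2) + ccw_angle (P s3) (P s2) (P e2) = pi"
    "ccw_angle (P s3) (P e3) (P s1) + ccw_angle (P e3) (P s1) (P s3) + ccw_angle (P s1) (P s3) (P e3) = pi"
    "ccw_angle (P s1) (P s2) (P s3) + ccw_angle (P s2) (P s3) (P s1) + ccw_angle (P s3) (P s1) (P s2) = pi"
    by (rule ccw_angle_triangle_sum, rule C; use V r1 r2 r3 in auto)+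
  ultimately show False by linarith
qed

section \<open>Arcs of the cyclic order\<close>

lemma cdist_eq: "i < n \<Longrightarrow> k < n \<Longrightarrow> cdist n i k = (if i \<le> k then k - i else k + n - i)"
  unfolding cdist_def by (auto simp: mod_if le_diff_conv2 less_diff_conv2)

lemma cdist_self: "cdist n i i = 0"
  by (simp add: cdist_def)

lemma cdist_inj: "i < n \<Longrightarrow> k < n \<Longrightarrow> l < n \<Longrightarrow> cdist n i k = cdist n i l \<Longrightarrow> k = l"
  by (auto simp: cdist_eq split: if_splits)

lemma mem_cyc_open_iff:
  "a < n \<Longrightarrow> c < n \<Longrightarrow>
   b \<in> cyc_open n a c \<longleftrightarrow> b < n \<and> (if a \<le> c then a < b \<and> b < c else a < b \<or> b < c)"
  unfolding cyc_open_def by (auto simp: cdist_eq split: if_splits)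

lemma mem_cyc_closed_iff:
  "a < n \<Longrightarrow> c < n \<Longrightarrow>
   b \<in> cyc_closed n a c \<longleftrightarrow> b < n \<and> (if a \<le> c then a \<le> b \<and> b \<le> c else a \<le> b \<or> b \<le> c)"
  unfolding cyc_closed_def by (auto simp: cdist_eq split: if_splits)

lemma cyc_open_lt: "b \<in> cyc_open n a c \<Longrightarrow> b < n"
  unfolding cyc_open_def by auto

lemma cyc_open_distinct: "b \<in> cyc_open n a c \<Longrightarrow> b \<noteq> a \<and> b \<noteq> c \<and> a \<noteq> c"
  unfolding cyc_open_def cdist_def by auto

lemma cyc_closed_eq: "s < n \<Longrightarrow> e < n \<Longrightarrow> cyc_closed n s e = insert s (insert e (cyc_open n s e))"
  by (auto simp: mem_cyc_open_iff mem_cyc_closed_iff split: if_splits)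

lemma mem_cyc_open_swap:
  "a < n \<Longrightarrow> b < n \<Longrightarrow> x < n \<Longrightarrow> x \<noteq> a \<Longrightarrow> x \<noteq> b \<Longrightarrow> a \<noteq> b \<Longrightarrow> x \<notin> cyc_open n a b \<Longrightarrow>
   x \<in> cyc_open n b a"
  by (auto simp: mem_cyc_open_iff split: if_splits)

lemma cyc_open_split:
  assumes "a < n" "c < n" "b \<in> cyc_open n a c"
  shows "cyc_open n a b \<subseteq> cyc_open n a c" "cyc_open n b c \<subseteq> cyc_open n a c"
  using assms cyc_open_lt[OF assms(3)] by (auto simp: mem_cyc_open_iff split: if_splits)

lemma cyc_open_interleave:
  assumes "a < n" "x < n" "b \<in> cyc_open n a x" "y \<in> cyc_open n x a"
  shows "x \<in> cyc_open n a y" "x \<in> cyc_open n b y" "b \<in> cyc_open n a y"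
  using assms cyc_open_lt[OF assms(3)] cyc_open_lt[OF assms(4)]
  by (auto simp: mem_cyc_open_iff split: if_splits)

lemma cyc_open_of_cdist:
  assumes "s < n" "a < n" "b < n" "c < n" "cdist n s a < cdist n s b" "cdist n s b < cdist n s c"
  shows "b \<in> cyc_open n a c"
  using assms by (auto simp: mem_cyc_open_iff cdist_eq split: if_splits)

lemma mem_cyc_closed_cdist:
  assumes "s < n" "a < n" "b < n" "x < n" "s \<notin> cyc_closed n a b"
  shows "x \<in> cyc_closed n a b \<longleftrightarrow> cdist n s a \<le> cdist n s x \<and> cdist n s x \<le> cdist n s b"
  using assms by (auto simp: mem_cyc_closed_iff cdist_eq split: if_splits)

lemma mem_cyc_open_cdist:
  assumes "s < n" "a < n" "b < n" "x < n" "s \<notin> cyc_closed n a b"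
  shows "x \<in> cyc_open n a b \<longleftrightarrow> cdist n s a < cdist n s x \<and> cdist n s x < cdist n s b"
  using assms by (auto simp: mem_cyc_closed_iff mem_cyc_open_iff cdist_eq split: if_splits)

lemma cyc_closed_disjoint:
  assumes "a < n" "b < n" "c < n" "d < n"
    "c \<notin> cyc_closed n a b" "d \<notin> cyc_closed n a b" "a \<notin> cyc_closed n c d"
  shows "cyc_closed n a b \<inter> cyc_closed n c d = {}"
  using assms by (auto simp: mem_cyc_closed_iff split: if_splits)

lemma cyc_open_closed_disjoint:
  assumes "P < n" "N < n" "s < n" "e < n" "s \<notin> cyc_open n P N" "e \<notin> cyc_open n P N"
    "P \<notin> cyc_closed n s e \<or> N \<notin> cyc_closed n s e"
  shows "cyc_open n P N \<inter> cyc_closed n s e = {}"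
  using assms by (auto simp: mem_cyc_closed_iff mem_cyc_open_iff split: if_splits)

lemma cyc_closed_subset_cyc_open:
  assumes "s < n" "e < n" "P < n" "N < n" "k \<in> cyc_closed n s e" "k \<in> cyc_open n P N"
    "P \<notin> cyc_closed n s e" "N \<notin> cyc_closed n s e"
  shows "cyc_closed n s e \<subseteq> cyc_open n P N"
  using assms cyc_open_lt[OF assms(6)] by (auto simp: mem_cyc_open_iff mem_cyc_closed_iff split: if_splits)

lemma cyc_closed_subset_cyc_open_if_ends:
  assumes "P < n" "N < n" "s \<in> cyc_open n P N" "e \<in> cyc_open n P N" "P \<in> cyc_open n e s"
  shows "cyc_closed n s e \<subseteq> cyc_open n P N"
  using assms cyc_open_lt[OF assms(3)] cyc_open_lt[OF assms(4)]
  by (auto simp: mem_cyc_open_iff mem_cyc_closed_iff split: if_splits)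

lemma cyc_open_subset_cyc_closed:
  assumes "s < n" "e < n" "P < n" "N < n" "P \<in> cyc_closed n s e" "N \<in> cyc_closed n s e"
    "k \<notin> cyc_closed n s e" "k \<in> cyc_open n P N"
  shows "cyc_open n N P \<subseteq> cyc_closed n s e"
  using assms cyc_open_lt[OF assms(8)] by (auto simp: mem_cyc_open_iff mem_cyc_closed_iff split: if_splits)

lemma gap_between_cyc_closed:
  assumes "sx < n" "ex < n" "sy < n" "ey < n" "cyc_closed n sx ex \<inter> cyc_closed n sy ey = {}"
    and P: "P \<in> cyc_closed n sx ex" and N: "N \<in> cyc_closed n sy ey"
    and gap: "(cyc_closed n sx ex \<union> cyc_closed n sy ey) \<inter> cyc_open n P N = {}"
  shows "P = ex" "N = sy"
proof -
  have lt: "P < n" "N < n" using P N unfolding cyc_closed_def by auto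
  have PN: "P \<noteq> N" using P N assms(5) by auto
  show "P = ex"
  proof (rule ccontr)
    assume "P \<noteq> ex"
    define P' where "P' = (if Suc P = n then 0 else Suc P)"
    have "P' \<in> cyc_closed n sx ex"
      using P \<open>P \<noteq> ex\<close> assms(1,2) lt unfolding P'_def by (auto simp: mem_cyc_closed_iff split: if_splits)
    moreover have "P' \<noteq> N" using calculation N assms(5) by auto
    then have "P' \<in> cyc_open n P N"
      using PN lt unfolding P'_def by (auto simp: mem_cyc_open_iff split: if_splits)
    ultimately show False using gap by auto
  qed
  show "N = sy"
  proof (rule ccontr)
    assume "N \<noteq> sy"
    define N' where "N' = (if N = 0 then n - 1 else N - 1)"
    have "N' \<in> cyc_closed n sy ey"
      using N \<open>N \<noteq> sy\<close> assms(3,4) lt unfolding N'_def by (auto simp: mem_cyc_closed_iff split: if_splits)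
    moreover have "N' \<noteq> P" using calculation P assms(5) by auto
    then have "N' \<in> cyc_open n P N"
      using PN lt unfolding N'_def by (auto simp: mem_cyc_open_iff split: if_splits)
    ultimately show False using gap by auto
  qed
qed

lemma cyc_closed_gaps_cover:
  assumes "sx < n" "ex < n" "sy < n" "ey < n" "cyc_closed n sx ex \<inter> cyc_closed n sy ey = {}"
    and "k < n"
  shows "k \<in> cyc_closed n sx ex \<union> cyc_closed n sy ey \<union> cyc_open n ex sy \<union> cyc_open n ey sx"
proof -
  have "sx \<in> cyc_closed n sx ex" "sy \<in> cyc_closed n sy ey"
    using assms(1-4) by (auto simp: mem_cyc_closed_iff)
  then have "sx \<notin> cyc_closed n sy ey" "sy \<notin> cyc_closed n sx ex" using assms(5) by auto
  then show ?thesis using assms(1-4,6) by (auto simp: mem_cyc_closed_iff mem_cyc_open_iff split: if_splits)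
qed

text \<open>The gap around \<open>k\<close> runs from the point of \<open>U\<close> farthest from \<open>k\<close> counterclockwise
  to the nearest one.\<close>
lemma gap_exists:
  assumes fin: "finite U" and U: "U \<subseteq> {..<n}" and xy: "x \<in> U" "y \<in> U" "x \<noteq> y"
    and k: "k < n" "k \<notin> U"
  obtains P N where "P \<in> U" "N \<in> U" "U \<inter> cyc_open n P N = {}" "k \<in> cyc_open n P N"
proof -
  let ?d = "cdist n k"
  have ne: "?d ` U \<noteq> {}" and fi: "finite (?d ` U)" using xy fin by auto
  obtain N where N: "N \<in> U" "?d N = Min (?d ` U)" using Min_in[OF fi ne] by auto
  obtain P where P: "P \<in> U" "?d P = Max (?d ` U)" using Max_in[OF fi ne] by auto
  have lo: "?d N \<le> ?d l" and hi: "?d l \<le> ?d P" if "l \<in> U" for l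
    using that N P fi by auto
  have lt: "l < n" if "l \<in> U" for l using that U by auto
  have "0 < ?d N"
    using cdist_inj[of k n N k] cdist_self[of n k] k N(1) lt by (metis neq0_conv)
  moreover have "?d N < ?d P"
  proof (rule ccontr)
    assume "\<not> ?d N < ?d P"
    then have "?d x = ?d y" using lo hi xy by (meson le_antisym not_less order_trans)
    then show False using cdist_inj k lt xy by metis
  qed
  moreover note Plt = lt[OF P(1)] and Nlt = lt[OF N(1)]
  ultimately have "k \<in> cyc_open n P N" using k by (auto simp: mem_cyc_open_iff cdist_eq split: if_splits)
  moreover have "l \<notin> cyc_open n P N" if "l \<in> U" for l
    using lo[OF that] hi[OF that] lt[OF that] Plt Nlt k
    by (auto simp: mem_cyc_open_iff cdist_eq split: if_splits)
  ultimately show ?thesis using that P N by blast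
qed

lemma portion_commute: "portion n F X Y = portion n F Y X"
  unfolding portion_def by blast

lemma gap_subset_portion:
  assumes "X \<in> F" "Y \<in> F" "P \<in> X" "N \<in> Y" "P < n" "N < n" "\<Union>F \<inter> cyc_open n P N = {}"
  shows "cyc_open n P N \<subseteq> portion n F X Y"
proof
  fix k assume k: "k \<in> cyc_open n P N"
  then have "prev_is n F k X" "next_is n F k Y"
    using assms cyc_open_split[OF assms(5,6) k] unfolding prev_is_def next_is_def by blast+
  then show "k \<in> portion n F X Y"
    using k assms(7) cyc_open_lt[OF k] unfolding portion_def by blast
qed

lemma two_gaps_between_cyc_closed:
  assumes X: "X = cyc_closed n sx ex" and Y: "Y = cyc_closed n sy ey"
    and lt: "sx < n" "ex < n" "sy < n" "ey < n" and XY: "X \<inter> Y = {}"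
    and U: "U \<subseteq> {..<n}" "X \<union> Y \<subseteq> U"
    and gaps: "U \<inter> cyc_open n P1 N1 = {}" "U \<inter> cyc_open n P2 N2 = {}"
      "cyc_open n P1 N1 \<noteq> cyc_open n P2 N2"
    and ends: "(P1 \<in> X \<and> N1 \<in> Y) \<or> (P1 \<in> Y \<and> N1 \<in> X)" "(P2 \<in> X \<and> N2 \<in> Y) \<or> (P2 \<in> Y \<and> N2 \<in> X)"
  shows "U \<subseteq> X \<union> Y"
proof -
  have XYU: "(X \<union> Y) \<inter> cyc_open n P N = {}" if "U \<inter> cyc_open n P N = {}" for P N
    using that U by blast
  have gap_cases: "cyc_open n P N = cyc_open n ex sy \<or> cyc_open n P N = cyc_open n ey sx"
    if PN: "(P \<in> X \<and> N \<in> Y) \<or> (P \<in> Y \<and> N \<in> X)" and gap: "U \<inter> cyc_open n P N = {}" for P N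
  proof -
    have XY': "cyc_closed n sy ey \<inter> cyc_closed n sx ex = {}" using XY X Y by blast
    from PN show ?thesis
    proof
      assume "P \<in> X \<and> N \<in> Y"
      then have "P = ex" "N = sy"
        using gap_between_cyc_closed[OF lt XY[unfolded X Y]] XYU[OF gap] X Y by blast+
      then show ?thesis by simp
    next
      assume "P \<in> Y \<and> N \<in> X"
      then have "P = ey" "N = sx"
        using gap_between_cyc_closed[OF lt(3,4,1,2) XY'] XYU[OF gap] X Y by (metis Un_commute)+
      then show ?thesis by simp
    qed
  qed
  have "U \<inter> cyc_open n ex sy = {}" "U \<inter> cyc_open n ey sx = {}"
    using gap_cases[OF ends(1) gaps(1)] gap_cases[OF ends(2) gaps(2)] gaps by metis+
  then show ?thesis using cyc_closed_gaps_cover[OF lt XY[unfolded X Y]] U X Y by blast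
qed

section \<open>Convex position\<close>

lemma orient_rotate: "orient a b c = orient b c a"
  unfolding orient_def by (simp add: algebra_simps)

lemma orient_pos_if_cyc_open:
  assumes "convex_ccw n p" "a < n" "c < n" "b \<in> cyc_open n a c"
  shows "orient (p a) (p b) (p c) > 0"
proof -
  have C: "orient (p x) (p y) (p z) > 0" if "x < y" "y < z" "z < n" for x y z
    using assms(1) that unfolding convex_ccw_def by blast
  have "b < n" using cyc_open_lt[OF assms(4)] .
  then consider "a < b" "b < c" | "c < a" "a < b" | "b < c" "c < a"
    using assms(2-4) by (auto simp: mem_cyc_open_iff split: if_splits)
  then show ?thesis
    using C assms(2,3) \<open>b < n\<close> orient_rotate by cases metis+
qed

text \<open>The diagonals \<open>A X\<close> and \<open>B Y\<close> of the convex quadrilateral \<open>A B X Y\<close> cross: the identity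
  below writes their common point as a convex combination of \<open>A, X\<close> and of \<open>B, Y\<close>.\<close>
lemma crossing_pairs_not_separable:
  fixes A B X Y v :: "real^2" and \<beta> :: real
  assumes "orient A B X > 0" "orient A X Y > 0" "orient B X Y > 0" "orient A B Y > 0"
    and "v \<bullet> A \<le> \<beta>" "v \<bullet> X \<le> \<beta>" "v \<bullet> B > \<beta>" "v \<bullet> Y > \<beta>"
  shows False
proof -
  let ?a = "orient B X Y" and ?b = "orient A X Y" and ?c = "orient A B Y" and ?d = "orient A B X"
  have "?a * (v \<bullet> A) + ?c * (v \<bullet> X) = ?b * (v \<bullet> B) + ?d * (v \<bullet> Y)"
    unfolding orient_def inner_vec_def sum_2 by (simp add: algebra_simps)
  moreover have "?a * (v \<bullet> A) + ?c * (v \<bullet> X) \<le> ?a * \<beta> + ?c * \<beta>"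
    using assms by (intro add_mono mult_left_mono) auto
  moreover have "?b * (v \<bullet> B) + ?d * (v \<bullet> Y) > ?b * \<beta> + ?d * \<beta>"
    using assms by (intro add_strict_mono mult_strict_left_mono) auto
  moreover have "?a + ?c = ?b + ?d" unfolding orient_def by (simp add: algebra_simps)
  then have "?a * \<beta> + ?c * \<beta> = ?b * \<beta> + ?d * \<beta>" by (metis distrib_right)
  ultimately show False by linarith
qed

section \<open>Gadgets\<close>

definition cpx :: "real^2 \<Rightarrow> complex" where
  "cpx v = Complex (v$1) (v$2)"

lemma orient_cplx_cpx: "orient_cplx (cpx a) (cpx b) (cpx c) = orient a b c"
  unfolding orient_cplx_def orient_def cpx_def by (simp add: algebra_simps)

lemma dist_eq_cmod_cpx: "dist x y = cmod (cpx x - cpx y)"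
  unfolding dist_norm norm_vec_def L2_set_def cpx_def cmod_def by (simp add: sum_2 power2_eq_square)

definition gadget :: "nat \<Rightarrow> (nat \<Rightarrow> real^2) \<Rightarrow> nat \<Rightarrow> nat \<Rightarrow> nat \<Rightarrow> nat \<Rightarrow> bool" where
  "gadget n p s u w e \<longleftrightarrow> s < n \<and> e < n \<and> u \<in> cyc_open n s e \<and> w \<in> cyc_open n s e \<and>
     dist (p e) (p s) \<le> 1 \<and> dist (p u) (p e) > 1 \<and> dist (p s) (p w) > 1"

lemma three_ordered_gadgets_impossible:
  assumes conv: "convex_ccw n p"
    and g1: "gadget n p s1 u1 w1 e1" and g2: "gadget n p s2 u2 w2 e2" and g3: "gadget n p s3 u3 w3 e3"
    and out: "s1 \<notin> cyc_closed n s2 e2" "s1 \<notin> cyc_closed n s3 e3"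
    and order: "cdist n s1 e1 < cdist n s1 s2" "cdist n s1 e2 < cdist n s1 s3"
  shows False
proof -
  define r where "r = cdist n s1"
  note G = g1[unfolded gadget_def] g2[unfolded gadget_def] g3[unfolded gadget_def]
  have lt: "u1 < n" "w1 < n" "u2 < n" "w2 < n" "u3 < n" "w3 < n"
    using G cyc_open_lt by blast+
  have "r s1 < r u1" "r s1 < r w1" "r u1 < r e1" "r w1 < r e1"
    using G unfolding r_def cyc_open_def by (auto simp: cdist_self)
  moreover have "r s2 < r u2" "r u2 < r e2" "r s2 < r w2" "r w2 < r e2"
    using mem_cyc_open_cdist[of s1 n s2 e2] G lt out unfolding r_def by auto
  moreover have "r s3 < r u3" "r u3 < r e3" "r s3 < r w3" "r w3 < r e3"
    using mem_cyc_open_cdist[of s1 n s3 e3] G lt out unfolding r_def by auto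
  moreover have "orient_cplx (cpx (p a)) (cpx (p b)) (cpx (p c)) > 0"
    if "a \<in> {..<n}" "b \<in> {..<n}" "c \<in> {..<n}" "r a < r b" "r b < r c" for a b c
    using that cyc_open_of_cdist[of s1 n a b c] orient_pos_if_cyc_open[OF conv] G
    unfolding r_def orient_cplx_cpx by auto
  moreover have "{s1, u1, w1, e1, s2, u2, w2, e2, s3, u3, w3, e3} \<subseteq> {..<n}" using G lt by auto
  moreover have "cmod (cpx (p e1) - cpx (p s1)) \<le> 1" "cmod (cpx (p u1) - cpx (p e1)) > 1"
    "cmod (cpx (p s1) - cpx (p w1)) > 1" "cmod (cpx (p e2) - cpx (p s2)) \<le> 1"
    "cmod (cpx (p u2) - cpx (p e2)) > 1" "cmod (cpx (p s2) - cpx (p w2)) > 1"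
    "cmod (cpx (p e3) - cpx (p s3)) \<le> 1" "cmod (cpx (p u3) - cpx (p e3)) > 1"
    "cmod (cpx (p s3) - cpx (p w3)) > 1"
    using G by (simp_all add: dist_eq_cmod_cpx)
  ultimately show False
    using three_gadgets_impossible[of "{..<n}" r "\<lambda>k. cpx (p k)" s1 u1 w1 e1 s2 u2 w2 e2 s3 u3 w3 e3]
      order unfolding r_def by blast
qed

lemma three_disjoint_gadgets_impossible:
  assumes conv: "convex_ccw n p"
    and g1: "gadget n p s1 u1 w1 e1" and g2: "gadget n p s2 u2 w2 e2" and g3: "gadget n p s3 u3 w3 e3"
    and d12: "cyc_closed n s1 e1 \<inter> cyc_closed n s2 e2 = {}"
    and d13: "cyc_closed n s1 e1 \<inter> cyc_closed n s3 e3 = {}"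
    and d23: "cyc_closed n s2 e2 \<inter> cyc_closed n s3 e3 = {}"
  shows False
proof -
  define r where "r = cdist n s1"
  note G = g1[unfolded gadget_def] g2[unfolded gadget_def] g3[unfolded gadget_def]
  have ends: "s1 \<in> cyc_closed n s1 e1" "s2 \<in> cyc_closed n s2 e2" "e2 \<in> cyc_closed n s2 e2"
    "s3 \<in> cyc_closed n s3 e3" "e3 \<in> cyc_closed n s3 e3"
    using G by (simp_all add: cyc_closed_def cdist_self)
  have out: "s1 \<notin> cyc_closed n s2 e2" "s1 \<notin> cyc_closed n s3 e3"
    using ends d12 d13 by blast+
  have "r e1 < r s2" "r e1 < r s3" "r e1 < r e2" "r e1 < r e3"
    using ends d12 d13 G unfolding r_def cyc_closed_def by auto
  moreover have "r s2 < r e2" "r s3 < r e3"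
    using mem_cyc_open_cdist[of s1 n s2 e2 u2] mem_cyc_open_cdist[of s1 n s3 e3 u3]
      G cyc_open_lt[of u2] cyc_open_lt[of u3] out unfolding r_def by auto
  moreover have "\<not> (r s2 \<le> r s3 \<and> r s3 \<le> r e2)" "\<not> (r s3 \<le> r s2 \<and> r s2 \<le> r e3)"
    using mem_cyc_closed_cdist[of s1 n s2 e2 s3] mem_cyc_closed_cdist[of s1 n s3 e3 s2]
      G ends d23 out unfolding r_def by blast+
  ultimately consider "r e1 < r s2" "r e2 < r s3" | "r e1 < r s3" "r e3 < r s2" by linarith
  then show False
    using three_ordered_gadgets_impossible[OF conv g1 g2 g3 out]
      three_ordered_gadgets_impossible[OF conv g1 g3 g2 out(2,1)] unfolding r_def by cases
qed

section \<open>Line-separable assignments\<close>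

definition group_points :: "nat set set \<Rightarrow> (nat set \<Rightarrow> nat) \<Rightarrow> nat \<Rightarrow> nat set" where
  "group_points A \<phi> c = \<Union>(center_group A \<phi> c)"

locale separable_assignment =
  fixes n :: nat and p :: "nat \<Rightarrow> real^2" and w :: "nat \<Rightarrow> real"
    and S :: "nat set" and A :: "nat set set" and \<phi> :: "nat set \<Rightarrow> nat"
  assumes conv: "convex_ccw n p"
    and wpos: "\<forall>k<n. w k > 0"
    and opt: "optimal_dominating n p w S"
    and part: "is_partition n A"
    and assign: "is_assignment n p S A \<phi>"
    and sep: "line_separable p S A \<phi>"
    and center_mem: "\<forall>c\<in>S. \<exists>\<alpha>\<in>center_group A \<phi> c. c \<in> \<alpha>"
    and second: "\<forall>c\<in>S. \<forall>\<beta>\<in>center_group A \<phi> c. c \<notin> \<beta> \<longrightarrow>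
        (\<exists>t\<in>\<beta>. \<exists>q1\<in>S. \<exists>q2\<in>S. q1 \<in> cyc_open n c t \<and> q2 \<in> cyc_open n t c \<and>
            dist (p t) (p q1) > 1 \<and> dist (p t) (p q2) > 1)"
begin

lemma part_subset: "\<alpha> \<in> A \<Longrightarrow> \<alpha> \<subseteq> {..<n}"
  using part unfolding is_partition_def by blast

lemma part_nonempty: "\<alpha> \<in> A \<Longrightarrow> \<alpha> \<noteq> {}"
  using part unfolding is_partition_def by blast

lemma part_sublist: "\<alpha> \<in> A \<Longrightarrow> \<exists>s<n. \<exists>e<n. \<alpha> = cyc_closed n s e"
  using part unfolding is_partition_def is_sublist_def by blast

lemma part_disjoint: "\<alpha> \<in> A \<Longrightarrow> \<beta> \<in> A \<Longrightarrow> \<alpha> \<noteq> \<beta> \<Longrightarrow> \<alpha> \<inter> \<beta> = {}"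
  using part unfolding is_partition_def by blast

lemma part_covers: "k < n \<Longrightarrow> \<exists>\<alpha>\<in>A. k \<in> \<alpha>"
  using part unfolding is_partition_def by blast

lemma mem_group_points: "k \<in> group_points A \<phi> c \<longleftrightarrow> (\<exists>\<alpha>\<in>A. \<phi> \<alpha> = c \<and> k \<in> \<alpha>)"
  unfolding group_points_def center_group_def by blast

lemma group_points_disjoint:
  "k \<in> group_points A \<phi> c \<Longrightarrow> k \<in> group_points A \<phi> c' \<Longrightarrow> c = c'"
  unfolding mem_group_points using part_disjoint by blast

lemma group_points_lt: "k \<in> group_points A \<phi> c \<Longrightarrow> k < n"
  unfolding mem_group_points using part_subset by blast

lemma center_in_group_points: "c \<in> S \<Longrightarrow> c \<in> group_points A \<phi> c"
  using center_mem unfolding group_points_def by blast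

lemma dist_group_points_center: "k \<in> group_points A \<phi> c \<Longrightarrow> dist (p k) (p c) \<le> 1"
  using assign unfolding mem_group_points is_assignment_def by blast

lemma group_points_eq: "center_group A \<phi> c = {a, b} \<Longrightarrow> group_points A \<phi> c = a \<union> b"
  unfolding group_points_def by simp

lemma groups_not_interleaved:
  assumes "c1 \<in> S" "c2 \<in> S" "c1 \<noteq> c2"
    and a: "a \<in> group_points A \<phi> c1" and x: "x \<in> group_points A \<phi> c1"
    and b: "b \<in> group_points A \<phi> c2" and y: "y \<in> group_points A \<phi> c2"
    and "b \<in> cyc_open n a x" "y \<in> cyc_open n x a"
  shows False
proof -
  obtain v \<beta> where "\<forall>k\<in>group_points A \<phi> c1. v \<bullet> p k \<le> \<beta>" "\<forall>k\<in>group_points A \<phi> c2. v \<bullet> p k > \<beta>"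
    using sep assms(1-3) unfolding line_separable_def group_points_def by blast
  moreover have lt: "a < n" "x < n" "b < n" "y < n" using a x b y group_points_lt by auto
  note C = cyc_open_interleave[OF lt(1,2) assms(8,9)]
  have "orient (p a) (p b) (p x) > 0" "orient (p a) (p x) (p y) > 0"
    "orient (p b) (p x) (p y) > 0" "orient (p a) (p b) (p y) > 0"
    using orient_pos_if_cyc_open[OF conv] lt assms(8) C by blast+
  ultimately show False
    using crossing_pairs_not_separable[of "p a" "p b" "p x" "p y" v \<beta>] a x b y by auto
qed

text \<open>Otherwise \<open>S - {q}\<close> would still dominate every point, contradicting optimality.\<close>
lemma private_point:
  assumes q: "q \<in> S"
  obtains k where "k \<in> group_points A \<phi> q" "\<forall>s\<in>S. s \<noteq> q \<longrightarrow> dist (p k) (p s) > 1"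
proof (rule ccontr)
  assume "\<not> thesis"
  then have H: "\<forall>k\<in>group_points A \<phi> q. \<exists>s\<in>S - {q}. dist (p k) (p s) \<le> 1"
    using that by (meson Diff_iff not_le singletonD)
  have "dominating n p (S - {q})"
    unfolding dominating_def
  proof (intro conjI allI impI)
    show "S - {q} \<subseteq> {..<n}" using opt unfolding optimal_dominating_def dominating_def by blast
  next
    fix k assume "k < n"
    then obtain \<alpha> where \<alpha>: "\<alpha> \<in> A" "k \<in> \<alpha>" using part_covers by blast
    show "k \<in> S - {q} \<or> (\<exists>s\<in>S - {q}. dist (p k) (p s) \<le> 1)"
    proof (cases "\<phi> \<alpha> = q")
      case True
      then show ?thesis using H \<alpha> mem_group_points by blast
    next
      case False
      then show ?thesis using assign \<alpha> q unfolding is_assignment_def by blast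
    qed
  qed
  then have "sum w S \<le> sum w (S - {q})" using opt unfolding optimal_dominating_def by blast
  moreover have "finite S" "q < n"
    using opt q finite_subset unfolding optimal_dominating_def dominating_def by auto
  ultimately have "sum w S \<le> sum w S - w q" using q by (simp add: sum_diff1)
  then show False using wpos \<open>q < n\<close> by force
qed

lemma private_point_between:
  assumes x: "x \<in> S" and q: "q \<in> S" "q \<noteq> x"
    and a: "a \<in> group_points A \<phi> x" and b: "b \<in> group_points A \<phi> x" and qab: "q \<in> cyc_open n a b"
  obtains v where "v \<in> cyc_open n a b" "dist (p v) (p x) > 1"
proof -
  obtain k where k: "k \<in> group_points A \<phi> q" "\<forall>s\<in>S. s \<noteq> q \<longrightarrow> dist (p k) (p s) > 1"
    using private_point[OF q(1)] by blast
  have "k \<in> cyc_open n a b"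
  proof (rule ccontr)
    assume "k \<notin> cyc_open n a b"
    moreover have "a < n" "b < n" "k < n" using a b k group_points_lt by auto
    moreover have "k \<noteq> a" "k \<noteq> b" using k a b group_points_disjoint q(2) by blast+
    ultimately have "k \<in> cyc_open n b a" using mem_cyc_open_swap cyc_open_distinct[OF qab] by blast
    then show False
      using groups_not_interleaved[OF x q(1) q(2)[symmetric] a b center_in_group_points[OF q(1)] k(1) qab]
      by blast
  qed
  moreover have "dist (p k) (p x) > 1" using k(2) x q(2) by auto
  ultimately show ?thesis using that by (simp add: dist_commute)
qed

text \<open>Property (3) gives a point \<open>t\<close> of the second sublist and centers \<open>q\<^sub>1, q\<^sub>2\<close> on both sides of
  \<open>t\<close>, far from \<open>t\<close>. The one on the side of \<open>t\<close> away from \<open>m\<close> has its private point on the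
  same side, far from \<open>x\<close>; this gives a gadget with ends \<open>x\<close> and \<open>t\<close>.\<close>
lemma double_center_gadget:
  assumes xS: "x \<in> S" and gx: "center_group A \<phi> x = {a, b}" "a \<noteq> b"
    and m: "m < n" "m \<notin> group_points A \<phi> x"
  obtains s u v e where "gadget n p s u v e" "s \<in> group_points A \<phi> x" "e \<in> group_points A \<phi> x"
    "m \<in> cyc_open n e s"
proof -
  obtain \<alpha> where \<alpha>: "\<alpha> \<in> center_group A \<phi> x" "x \<in> \<alpha>" using center_mem xS by blast
  obtain \<beta> where \<beta>: "\<beta> \<in> center_group A \<phi> x" "\<beta> \<noteq> \<alpha>" using gx \<alpha> by blast
  have "x \<notin> \<beta>" using part_disjoint \<alpha> \<beta> unfolding center_group_def by blast
  then obtain t q1 q2 where t: "t \<in> \<beta>" and q: "q1 \<in> S" "q2 \<in> S" "q1 \<in> cyc_open n x t"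
      "q2 \<in> cyc_open n t x" "dist (p t) (p q1) > 1" "dist (p t) (p q2) > 1"
    using second xS \<beta> by blast
  have tx: "t \<in> group_points A \<phi> x" using t \<beta> unfolding group_points_def by blast
  have xx: "x \<in> group_points A \<phi> x" using center_in_group_points xS .
  have lt: "x < n" "t < n" using xx tx group_points_lt by auto
  have dtx: "dist (p t) (p x) \<le> 1" using dist_group_points_center tx .
  show ?thesis
  proof (cases "m \<in> cyc_open n x t")
    case False
    then have "m \<in> cyc_open n t x"
      using mem_cyc_open_swap lt m xx tx cyc_open_distinct[OF q(3)] by metis
    moreover obtain v where "v \<in> cyc_open n x t" "dist (p v) (p x) > 1"
      using private_point_between[OF xS q(1) _ xx tx q(3)] cyc_open_distinct[OF q(3)] by blast
    ultimately show ?thesis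
      using that[of x q1 v t] lt q dtx xx tx unfolding gadget_def by (simp add: dist_commute)
  next
    case True
    obtain v where "v \<in> cyc_open n t x" "dist (p v) (p x) > 1"
      using private_point_between[OF xS q(2) _ tx xx q(4)] cyc_open_distinct[OF q(4)] by blast
    then show ?thesis
      using that[of t v q2 x] True lt q dtx xx tx unfolding gadget_def by (simp add: dist_commute)
  qed
qed

lemma gadget_arc_disjoint_group:
  assumes "x \<in> S" "y \<in> S" "x \<noteq> y"
    and s: "s \<in> group_points A \<phi> x" and e: "e \<in> group_points A \<phi> x"
    and m: "m \<in> group_points A \<phi> y" "m \<in> cyc_open n e s"
  shows "cyc_closed n s e \<inter> group_points A \<phi> y = {}"
proof -
  have "z \<notin> cyc_closed n s e" if z: "z \<in> group_points A \<phi> y" for z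
  proof
    assume "z \<in> cyc_closed n s e"
    moreover have "z \<noteq> s" "z \<noteq> e" using z s e group_points_disjoint assms(3) by blast+
    moreover have "s < n" "e < n" using s e group_points_lt by auto
    ultimately have "z \<in> cyc_open n s e" using cyc_closed_eq by blast
    then show False using groups_not_interleaved[OF assms(1-3) s e z m(1)] m(2) by blast
  qed
  then show ?thesis by blast
qed

lemma group_points_in_gap:
  assumes "x \<in> S" "c \<in> S" "x \<noteq> c"
    and P: "P \<in> group_points A \<phi> x" and N: "N \<in> group_points A \<phi> x"
    and k: "k \<in> group_points A \<phi> c" "k \<in> cyc_open n P N"
  shows "group_points A \<phi> c \<subseteq> cyc_open n P N"
proof
  fix k' assume k': "k' \<in> group_points A \<phi> c"
  show "k' \<in> cyc_open n P N"
  proof (rule ccontr)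
    assume "k' \<notin> cyc_open n P N"
    moreover have "P < n" "N < n" "k' < n" using P N k' group_points_lt by auto
    moreover have "k' \<noteq> P" "k' \<noteq> N" using group_points_disjoint P N k' assms(3) by blast+
    ultimately have "k' \<in> cyc_open n N P" using mem_cyc_open_swap cyc_open_distinct[OF k(2)] by metis
    then show False using groups_not_interleaved[OF assms(1-3) P N k(1) k' k(2)] by blast
  qed
qed

lemma same_center_gap_subset_portion:
  assumes xS: "x \<in> S" and yS: "y \<in> S" and cS: "c \<in> S" and xy: "x \<noteq> y" and xc: "x \<noteq> c"
    and gx: "center_group A \<phi> x = {a, b}"
    and P: "P \<in> group_points A \<phi> x" and N: "N \<in> group_points A \<phi> x"
    and gap: "(group_points A \<phi> x \<union> group_points A \<phi> y) \<inter> cyc_open n P N = {}"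
    and k: "k \<in> group_points A \<phi> c" "k \<in> cyc_open n P N"
    and F: "a \<in> F" "b \<in> F" "\<Union>F = group_points A \<phi> x \<union> group_points A \<phi> y"
  shows "group_points A \<phi> c \<subseteq> portion n F a b"
proof -
  have lt: "P < n" "N < n" using P N group_points_lt by auto
  have y: "y \<in> group_points A \<phi> y" using center_in_group_points yS .
  moreover have "y \<notin> cyc_open n P N" "y \<noteq> P" "y \<noteq> N"
    using gap y P N group_points_disjoint xy by blast+
  ultimately have yNP: "y \<in> cyc_open n N P"
    using mem_cyc_open_swap[OF lt] group_points_lt cyc_open_distinct[OF k(2)] by blast
  have "\<not> (P \<in> \<alpha> \<and> N \<in> \<alpha>)" if \<alpha>: "\<alpha> \<in> {a, b}" for \<alpha>
  proof
    assume PN: "P \<in> \<alpha> \<and> N \<in> \<alpha>"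
    have \<alpha>A: "\<alpha> \<in> A" and \<alpha>x: "\<alpha> \<subseteq> group_points A \<phi> x"
      using gx \<alpha> unfolding center_group_def group_points_def by auto
    obtain s e where se: "s < n" "e < n" "\<alpha> = cyc_closed n s e" using part_sublist[OF \<alpha>A] by blast
    have "k \<notin> \<alpha>" using k(1) \<alpha>x group_points_disjoint xc by blast
    then have "cyc_open n N P \<subseteq> \<alpha>" using cyc_open_subset_cyc_closed[OF se(1,2) lt] se PN k(2) by blast
    then show False using yNP y \<alpha>x group_points_disjoint xy by blast
  qed
  then have "(P \<in> a \<and> N \<in> b) \<or> (P \<in> b \<and> N \<in> a)" using P N group_points_eq[OF gx] by blast
  moreover have "\<Union>F \<inter> cyc_open n P N = {}" using gap F(3) by simp
  ultimately have "cyc_open n P N \<subseteq> portion n F a b"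
    using gap_subset_portion[OF F(1,2) _ _ lt] gap_subset_portion[OF F(2,1) _ _ lt] portion_commute
    by metis
  then show ?thesis using group_points_in_gap[OF xS cS xc P N k] by blast
qed

end

section \<open>Two centers with two sublists each\<close>

locale two_double_centers = separable_assignment +
  fixes i j :: nat and ai bi aj bj :: "nat set"
  assumes iS: "i \<in> S" and jS: "j \<in> S" and ij: "i \<noteq> j"
    and gi: "center_group A \<phi> i = {ai, bi}" "ai \<noteq> bi"
    and gj: "center_group A \<phi> j = {aj, bj}" "aj \<noteq> bj"
begin

abbreviation removed_sublists :: "nat set set" where
  "removed_sublists \<equiv> {ai, bi, aj, bj}"

abbreviation removed_points :: "nat set" where
  "removed_points \<equiv> group_points A \<phi> i \<union> group_points A \<phi> j"

definition mixed_ends :: "nat \<Rightarrow> nat \<Rightarrow> bool" where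
  "mixed_ends P N \<longleftrightarrow> (P \<in> group_points A \<phi> i \<and> N \<in> group_points A \<phi> j) \<or>
     (P \<in> group_points A \<phi> j \<and> N \<in> group_points A \<phi> i)"

lemma removed_sublists_in_part: "ai \<in> A" "bi \<in> A" "aj \<in> A" "bj \<in> A"
  using gi gj unfolding center_group_def by blast+

lemma Union_removed_sublists: "\<Union>removed_sublists = removed_points"
  using group_points_eq[OF gi(1)] group_points_eq[OF gj(1)] by auto

lemma removed_points_lt: "removed_points \<subseteq> {..<n}"
  using group_points_lt by blast

lemma group_points_disjoint_removed:
  "c \<noteq> i \<Longrightarrow> c \<noteq> j \<Longrightarrow> group_points A \<phi> c \<inter> removed_points = {}"
  using group_points_disjoint by blast

lemma sublist_in_gap:
  assumes "c \<noteq> i" "c \<noteq> j" and g: "g \<in> center_group A \<phi> c"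
  obtains P N where "P \<in> removed_points" "N \<in> removed_points"
    "removed_points \<inter> cyc_open n P N = {}" "g \<subseteq> cyc_open n P N"
proof -
  have gA: "g \<in> A" and gc: "g \<subseteq> group_points A \<phi> c"
    using g unfolding center_group_def group_points_def by auto
  obtain k where k: "k \<in> g" using part_nonempty[OF gA] by blast
  have "i \<in> removed_points" "j \<in> removed_points" "finite removed_points"
    using center_in_group_points iS jS removed_points_lt finite_subset by auto
  moreover have "k < n" "k \<notin> removed_points"
    using k gc part_subset[OF gA] group_points_disjoint_removed assms(1,2) by auto
  ultimately obtain P N where PN: "P \<in> removed_points" "N \<in> removed_points"
      "removed_points \<inter> cyc_open n P N = {}" "k \<in> cyc_open n P N"
    using gap_exists[OF _ removed_points_lt] ij by metis
  obtain s e where se: "s < n" "e < n" "g = cyc_closed n s e" using part_sublist[OF gA] by blast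
  have "P \<notin> g" "N \<notin> g" using PN(1,2) gc group_points_disjoint_removed assms(1,2) by blast+
  then have "g \<subseteq> cyc_open n P N"
    using cyc_closed_subset_cyc_open[OF se(1,2)] se k PN removed_points_lt by blast
  then show ?thesis using that PN by blast
qed

lemma unmixed_gap_subset_portion:
  assumes cS: "c \<in> S" and "c \<noteq> i" "c \<noteq> j"
    and ends: "P \<in> removed_points" "N \<in> removed_points" "\<not> mixed_ends P N"
    and gap: "removed_points \<inter> cyc_open n P N = {}"
    and g: "g \<in> center_group A \<phi> c" "g \<subseteq> cyc_open n P N"
  shows "group_points A \<phi> c \<subseteq> portion n removed_sublists ai bi \<or>
    group_points A \<phi> c \<subseteq> portion n removed_sublists aj bj"
proof -
  obtain k where "k \<in> g" using g(1) part_nonempty unfolding center_group_def by blast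
  then have k: "k \<in> group_points A \<phi> c" "k \<in> cyc_open n P N"
    using g unfolding group_points_def by blast+
  have F: "\<Union>removed_sublists = group_points A \<phi> j \<union> group_points A \<phi> i"
    using Union_removed_sublists by blast
  have "(P \<in> group_points A \<phi> i \<and> N \<in> group_points A \<phi> i) \<or>
      (P \<in> group_points A \<phi> j \<and> N \<in> group_points A \<phi> j)"
    using ends unfolding mixed_ends_def by blast
  then show ?thesis
  proof
    assume "P \<in> group_points A \<phi> i \<and> N \<in> group_points A \<phi> i"
    then show ?thesis
      using same_center_gap_subset_portion[OF iS jS cS ij _ gi(1) _ _ gap k _ _ Union_removed_sublists]
        assms(2) by simp
  next
    assume "P \<in> group_points A \<phi> j \<and> N \<in> group_points A \<phi> j"
    moreover have "(group_points A \<phi> j \<union> group_points A \<phi> i) \<inter> cyc_open n P N = {}"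
      using gap by blast
    ultimately show ?thesis
      using same_center_gap_subset_portion[OF jS iS cS ij[symmetric] _ gj(1) _ _ _ k _ _ F] assms(3) by simp
  qed
qed

lemma mixed_gap_subset_portion:
  assumes "mixed_ends P N" and gap: "removed_points \<inter> cyc_open n P N = {}"
    and g: "g \<subseteq> cyc_open n P N"
  obtains X Y where "X \<in> {ai, bi}" "Y \<in> {aj, bj}" "(P \<in> X \<and> N \<in> Y) \<or> (P \<in> Y \<and> N \<in> X)"
    "g \<subseteq> portion n removed_sublists X Y"
proof -
  obtain X Y where XY: "X \<in> {ai, bi}" "Y \<in> {aj, bj}" "(P \<in> X \<and> N \<in> Y) \<or> (P \<in> Y \<and> N \<in> X)"
    using assms(1) unfolding mixed_ends_def group_points_eq[OF gi(1)] group_points_eq[OF gj(1)] by blast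
  have lt: "P < n" "N < n" using assms(1) group_points_lt unfolding mixed_ends_def by blast+
  have XF: "X \<in> removed_sublists" "Y \<in> removed_sublists" using XY(1,2) by auto
  have F: "\<Union>removed_sublists \<inter> cyc_open n P N = {}" using gap Union_removed_sublists by simp
  from XY(3) have "cyc_open n P N \<subseteq> portion n removed_sublists X Y"
    using gap_subset_portion[OF XF _ _ lt F] gap_subset_portion[OF XF(2,1) _ _ lt F] portion_commute by metis
  then show ?thesis using that XY g by blast
qed

text \<open>Gadgets of \<open>c\<close>, \<open>i\<close> and \<open>j\<close> would lie on three disjoint arcs: the arc of \<open>c\<close> stays
  inside the gap, and the arcs of \<open>i\<close> and \<open>j\<close> avoid the other group and hence the gap,
  whose ends belong to both groups.\<close>
lemma mixed_gap_excludes_group: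
  assumes cS: "c \<in> S" and ci: "c \<noteq> i" and cj: "c \<noteq> j"
    and gc: "center_group A \<phi> c = {g1, g2}" "g1 \<noteq> g2"
    and ends: "mixed_ends P N" and gap: "removed_points \<inter> cyc_open n P N = {}"
    and sub: "group_points A \<phi> c \<subseteq> cyc_open n P N"
  shows False
proof -
  obtain mi mj where m: "mi \<in> {P, N}" "mi \<in> group_points A \<phi> i" "mj \<in> {P, N}" "mj \<in> group_points A \<phi> j"
    using ends unfolding mixed_ends_def by blast
  have lt: "P < n" "N < n" "mi < n" "mj < n" using ends m group_points_lt unfolding mixed_ends_def by blast+
  have "P \<notin> group_points A \<phi> c" using sub cyc_open_distinct by blast
  then obtain sc uc vc ec where Gc: "gadget n p sc uc vc ec" "sc \<in> group_points A \<phi> c"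
      "ec \<in> group_points A \<phi> c" "P \<in> cyc_open n ec sc"
    using double_center_gadget[OF cS gc lt(1)] by blast
  obtain si ui vi ei where Gi: "gadget n p si ui vi ei" "si \<in> group_points A \<phi> i"
      "ei \<in> group_points A \<phi> i" "mj \<in> cyc_open n ei si"
    using double_center_gadget[OF iS gi lt(4)] m(4) group_points_disjoint ij by metis
  obtain sj uj vj ej where Gj: "gadget n p sj uj vj ej" "sj \<in> group_points A \<phi> j"
      "ej \<in> group_points A \<phi> j" "mi \<in> cyc_open n ej sj"
    using double_center_gadget[OF jS gj lt(3)] m(2) group_points_disjoint ij by metis
  have ends_lt: "sc < n" "ec < n" "si < n" "ei < n" "sj < n" "ej < n"
    using Gc Gi Gj unfolding gadget_def by auto
  have Ci: "cyc_closed n si ei \<inter> group_points A \<phi> j = {}"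
    using gadget_arc_disjoint_group[OF iS jS ij Gi(2,3) m(4) Gi(4)] .
  have Cj: "cyc_closed n sj ej \<inter> group_points A \<phi> i = {}"
    using gadget_arc_disjoint_group[OF jS iS ij[symmetric] Gj(2,3) m(2) Gj(4)] .
  have "cyc_closed n sc ec \<subseteq> cyc_open n P N"
    using cyc_closed_subset_cyc_open_if_ends[OF lt(1,2)] sub Gc(2-4) by blast
  moreover have "cyc_open n P N \<inter> cyc_closed n si ei = {}"
    using cyc_open_closed_disjoint[OF lt(1,2) ends_lt(3,4)] gap Gi(2,3) Ci m(3,4) by blast
  moreover have "cyc_open n P N \<inter> cyc_closed n sj ej = {}"
    using cyc_open_closed_disjoint[OF lt(1,2) ends_lt(5,6)] gap Gj(2,3) Cj m(1,2) by blast
  moreover have "cyc_closed n si ei \<inter> cyc_closed n sj ej = {}"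
    using cyc_closed_disjoint[OF ends_lt(3-6)] Ci Cj Gi(2) Gj(2,3) by blast
  ultimately show False
    using three_disjoint_gadgets_impossible[OF conv Gc(1) Gi(1) Gj(1)] by blast
qed

lemma mixed_gaps_with_same_sublists:
  assumes X: "X \<in> {ai, bi}" and Y: "Y \<in> {aj, bj}"
    and ends: "(P1 \<in> X \<and> N1 \<in> Y) \<or> (P1 \<in> Y \<and> N1 \<in> X)" "(P2 \<in> X \<and> N2 \<in> Y) \<or> (P2 \<in> Y \<and> N2 \<in> X)"
    and gaps: "removed_points \<inter> cyc_open n P1 N1 = {}" "removed_points \<inter> cyc_open n P2 N2 = {}"
  shows "cyc_open n P1 N1 = cyc_open n P2 N2"
proof (rule ccontr)
  assume ne: "cyc_open n P1 N1 \<noteq> cyc_open n P2 N2"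
  obtain X' where X': "X' \<in> {ai, bi}" "X' \<noteq> X" using X gi(2) by blast
  have XA: "X \<in> A" "Y \<in> A" "X' \<in> A" using X Y X' removed_sublists_in_part by auto
  have Xi: "X \<subseteq> group_points A \<phi> i" "X' \<subseteq> group_points A \<phi> i" and Yj: "Y \<subseteq> group_points A \<phi> j"
    using X X' Y group_points_eq[OF gi(1)] group_points_eq[OF gj(1)] by auto
  have XY: "X \<inter> Y = {}" using Xi Yj group_points_disjoint ij by blast
  obtain sx ex sy ey where "sx < n" "ex < n" "X = cyc_closed n sx ex" "sy < n" "ey < n" "Y = cyc_closed n sy ey"
    using part_sublist XA by metis
  then have "removed_points \<subseteq> X \<union> Y"
    using two_gaps_between_cyc_closed[OF _ _ _ _ _ _ XY removed_points_lt _ gaps ne ends] Xi Yj by blast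
  moreover obtain z where "z \<in> X'" using part_nonempty XA by blast
  ultimately show False
    using Xi Yj part_disjoint[OF XA(3,1) X'(2)] group_points_disjoint ij by blast
qed

lemma double_center_in_portions:
  assumes cS: "c \<in> S" and ci: "c \<noteq> i" and cj: "c \<noteq> j"
    and gc: "center_group A \<phi> c = {g1, g2}" "g1 \<noteq> g2"
  shows "g1 \<union> g2 \<subseteq> portion n removed_sublists ai bi \<or>
    g1 \<union> g2 \<subseteq> portion n removed_sublists aj bj \<or>
    (\<exists>X\<in>{ai, bi}. \<exists>Y\<in>{aj, bj}. \<exists>X'\<in>{ai, bi}. \<exists>Y'\<in>{aj, bj}.
       (X, Y) \<noteq> (X', Y') \<and> g1 \<subseteq> portion n removed_sublists X Y \<and>
       g2 \<subseteq> portion n removed_sublists X' Y')"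
proof -
  have c: "group_points A \<phi> c = g1 \<union> g2" using group_points_eq[OF gc(1)] .
  have g: "g1 \<in> center_group A \<phi> c" "g2 \<in> center_group A \<phi> c" using gc(1) by auto
  obtain P1 N1 where G1: "P1 \<in> removed_points" "N1 \<in> removed_points"
      "removed_points \<inter> cyc_open n P1 N1 = {}" "g1 \<subseteq> cyc_open n P1 N1"
    using sublist_in_gap[OF ci cj g(1)] .
  obtain P2 N2 where G2: "P2 \<in> removed_points" "N2 \<in> removed_points"
      "removed_points \<inter> cyc_open n P2 N2 = {}" "g2 \<subseteq> cyc_open n P2 N2"
    using sublist_in_gap[OF ci cj g(2)] .
  consider "\<not> mixed_ends P1 N1" | "\<not> mixed_ends P2 N2" | "mixed_ends P1 N1" "mixed_ends P2 N2"
    by blast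
  then show ?thesis
  proof cases
    case 1
    then show ?thesis using unmixed_gap_subset_portion[OF cS ci cj G1(1,2) 1 G1(3) g(1) G1(4)] by (metis c)
  next
    case 2
    then show ?thesis using unmixed_gap_subset_portion[OF cS ci cj G2(1,2) 2 G2(3) g(2) G2(4)] by (metis c)
  next
    case 3
    obtain X1 Y1 where L1: "X1 \<in> {ai, bi}" "Y1 \<in> {aj, bj}"
        "(P1 \<in> X1 \<and> N1 \<in> Y1) \<or> (P1 \<in> Y1 \<and> N1 \<in> X1)" "g1 \<subseteq> portion n removed_sublists X1 Y1"
      using mixed_gap_subset_portion[OF 3(1) G1(3,4)] .
    obtain X2 Y2 where L2: "X2 \<in> {ai, bi}" "Y2 \<in> {aj, bj}"
        "(P2 \<in> X2 \<and> N2 \<in> Y2) \<or> (P2 \<in> Y2 \<and> N2 \<in> X2)" "g2 \<subseteq> portion n removed_sublists X2 Y2"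
      using mixed_gap_subset_portion[OF 3(2) G2(3,4)] .
    have "cyc_open n P1 N1 \<noteq> cyc_open n P2 N2"
      using mixed_gap_excludes_group[OF cS ci cj gc 3(1) G1(3)] c G1(4) G2(4) by auto
    then have "(X1, Y1) \<noteq> (X2, Y2)"
      using mixed_gaps_with_same_sublists[OF L1(1,2,3) _ G1(3) G2(3)] L2(3) by auto
    then show ?thesis using L1(1,2,4) L2(1,2,4) by metis
  qed
qed

end

theorem lemma3:
  fixes n :: nat and p :: "nat \<Rightarrow> real^2" and w :: "nat \<Rightarrow> real"
    and S :: "nat set" and A :: "nat set set" and \<phi> :: "nat set \<Rightarrow> nat"
    and i j :: nat and ai bi aj bj :: "nat set"
  assumes conv: "convex_ccw n p"
    and cocirc: "no_four_cocircular n p"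
    and wpos: "\<forall>k<n. w k > 0"
    and opt: "optimal_dominating n p w S"
    and part: "is_partition n A"
    and assign: "is_assignment n p S A \<phi>"
    and sep: "line_separable p S A \<phi>"
    and two: "\<forall>c\<in>S. card (center_group A \<phi> c) \<le> 2 \<and> (\<exists>\<alpha>\<in>center_group A \<phi> c. c \<in> \<alpha>)"
    and second: "\<forall>c\<in>S. \<forall>\<beta>\<in>center_group A \<phi> c. c \<notin> \<beta> \<longrightarrow>
        (\<exists>t\<in>\<beta>. \<exists>q1\<in>S. \<exists>q2\<in>S. q1 \<in> cyc_open n c t \<and> q2 \<in> cyc_open n t c \<and>
            dist (p t) (p q1) > 1 \<and> dist (p t) (p q2) > 1)"
    and iS: "i \<in> S" and jS: "j \<in> S" and ij: "i \<noteq> j"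
    and gi: "center_group A \<phi> i = {ai, bi}" "ai \<noteq> bi"
    and gj: "center_group A \<phi> j = {aj, bj}" "aj \<noteq> bj"
  shows "\<forall>c\<in>S. c \<noteq> i \<longrightarrow> c \<noteq> j \<longrightarrow> (\<forall>g1 g2. center_group A \<phi> c = {g1, g2} \<longrightarrow> g1 \<noteq> g2 \<longrightarrow>
      (let F = {ai, bi, aj, bj} in
         g1 \<union> g2 \<subseteq> portion n F ai bi \<or>
         g1 \<union> g2 \<subseteq> portion n F aj bj \<or>
         (\<exists>X\<in>{ai, bi}. \<exists>Y\<in>{aj, bj}. \<exists>X'\<in>{ai, bi}. \<exists>Y'\<in>{aj, bj}.
            (X, Y) \<noteq> (X', Y') \<and> g1 \<subseteq> portion n F X Y \<and> g2 \<subseteq> portion n F X' Y')))"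
proof -
  interpret two_double_centers n p w S A \<phi> i j ai bi aj bj
    using conv wpos opt part assign sep two second iS jS ij gi gj
    by unfold_locales blast+
  show ?thesis using double_center_in_portions by (simp add: Let_def)
qed

end
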